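(* Consider the Unbiased Space Saving sketch with $m$ bins run on an arbitrary (deterministic) stream of rows $x_1, x_2, \ldots$, each row being an item label. For any item $x$ and any time $t$, the estimate $\hat{N}_x(t)$ is an unbiased estimate of the true count $n_x(t)$, i.e. $\mathbb{E}\,\hat{N}_x(t) = n_x(t)$.
   Context: Unbiased Space Saving sketch with $m$ bins: maintain a list of $m$ (item, count) pairs, all counts initialized to $0$ (initially unlabeled). For each new row with item $x_{new}$: if $x_{new}$ is the label of some pair, increment that pair's count by $1$. Otherwise, find the pair $(x_{min}, \hat{N}_{min})$ with the smallest count, increment its count by $1$, and with probability $1/(\hat{N}_{min}+1)$ (independently of everything else) replace its label by $x_{new}$. After $t$ rows, $\hat{N}_x(t)$ is the count of the pair labeled $x$ if $x$ is a label, and $0$ otherwise; $n_x(t)$ is the number of occurrences of $x$ among the first $t$ rows. *)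

theory Defs
  imports "HOL-Probability.Probability"
begin

text \<open>A sketch state is a list of m bins (label, count); an unlabeled bin has label None.\<close>
type_synonym 'a uss_state = "('a option \<times> nat) list"

definition valid_min_selector :: "nat \<Rightarrow> ('a uss_state \<Rightarrow> nat) \<Rightarrow> bool" where
  "valid_min_selector m sel \<longleftrightarrow>
     (\<forall>s. length s = m \<longrightarrow> sel s < m \<and> (\<forall>j<m. snd (s ! sel s) \<le> snd (s ! j)))"

definition uss_step :: "('a uss_state \<Rightarrow> nat) \<Rightarrow> 'a uss_state \<Rightarrow> 'a \<Rightarrow> 'a uss_state pmf" where
  "uss_step sel s x =
     (case find (\<lambda>i. fst (s ! i) = Some x) [0..<length s] of
        Some i \<Rightarrow> return_pmf (s[i := (Some x, snd (s ! i) + 1)])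
      | None \<Rightarrow>
          (let i = sel s; c = snd (s ! i) in
             map_pmf (\<lambda>b. s[i := (if b then Some x else fst (s ! i), c + 1)])
                     (bernoulli_pmf (1 / real (c + 1)))))"

definition uss_run :: "nat \<Rightarrow> ('a uss_state \<Rightarrow> nat) \<Rightarrow> (nat \<Rightarrow> 'a) \<Rightarrow> nat \<Rightarrow> 'a uss_state pmf" where
  "uss_run m sel xs t =
     foldl (\<lambda>p x. p \<bind> (\<lambda>s. uss_step sel s x))
           (return_pmf (replicate m (None, 0))) (map xs [0..<t])"

definition uss_estimate :: "'a uss_state \<Rightarrow> 'a \<Rightarrow> nat" where
  "uss_estimate s x = (case find (\<lambda>p. fst p = Some x) s of Some p \<Rightarrow> snd p | None \<Rightarrow> 0)"

definition true_count :: "(nat \<Rightarrow> 'a) \<Rightarrow> 'a \<Rightarrow> nat \<Rightarrow> nat" where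
  "true_count xs x t = card {i. i < t \<and> xs i = x}"

end

theory Submission
  imports Defs
begin

text \<open>
  As long as the labels are distinct, the estimate of x is the sum over all bins of the
  count of the bin if it is labelled x, and 0 otherwise. An update increments the count c
  of exactly one bin. If that bin was relabelled to the new item y with probability
  1/(c+1), its expected contribution is c to its old label and 1 to y, the same as if
  the bin had kept its count c and y had been counted once more. Hence every step raises
  the expected estimate of x by exactly [y = x], and the tower property of conditional
  expectation sums these increments to the true count. Minimality of the chosen bin is
  irrelevant here: only that the selector returns a valid index is used (which already
  forces m \<ge> 1).
\<close>

lemma expectation_bind_pmf_finite:
  fixes h :: "'b \<Rightarrow> 'c::{banach, second_countable_topology}"
  assumes "finite (set_pmf p)" and "\<And>a. a \<in> set_pmf p \<Longrightarrow> finite (set_pmf (f a))"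
  shows "measure_pmf.expectation (p \<bind> f) h
           = measure_pmf.expectation p (\<lambda>a. measure_pmf.expectation (f a) h)"
  using assms by (simp add: pmf_expectation_bind[of "set_pmf p"] integral_measure_pmf[of "set_pmf p"])

definition labels_distinct :: "'a uss_state \<Rightarrow> bool" where
  "labels_distinct s \<longleftrightarrow>
     (\<forall>i j y. i < length s \<longrightarrow> j < length s \<longrightarrow> fst (s ! i) = Some y \<longrightarrow> fst (s ! j) = Some y \<longrightarrow> i = j)"

lemma labels_distinctD:
  "labels_distinct s \<Longrightarrow> i < length s \<Longrightarrow> j < length s \<Longrightarrow> fst (s ! i) = Some y \<Longrightarrow> fst (s ! j) = Some y
     \<Longrightarrow> i = j"
  unfolding labels_distinct_def by blast

lemma labels_distinct_replicate_None: "labels_distinct (replicate m (None, c))"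
  by (simp add: labels_distinct_def)

lemma labels_distinct_ConsD:
  assumes "labels_distinct (b # s)"
  shows "labels_distinct s" and "fst b = Some y \<Longrightarrow> j < length s \<Longrightarrow> fst (s ! j) \<noteq> Some y"
proof -
  show "labels_distinct s"
    unfolding labels_distinct_def
    using labels_distinctD[OF assms, of "Suc i" "Suc j" for i j] by simp
  show "fst (s ! j) \<noteq> Some y" if "fst b = Some y" "j < length s"
    using labels_distinctD[OF assms, of 0 "Suc j"] that by auto
qed

lemma labels_distinct_list_update:
  assumes "labels_distinct s" and "i < length s"
    and "\<And>j y. j < length s \<Longrightarrow> j \<noteq> i \<Longrightarrow> l = Some y \<Longrightarrow> fst (s ! j) \<noteq> Some y"
  shows "labels_distinct (s[i := (l, c)])"
  unfolding labels_distinct_def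
proof (intro allI impI)
  fix a b y
  assume "a < length (s[i := (l, c)])" "b < length (s[i := (l, c)])"
    and "fst (s[i := (l, c)] ! a) = Some y" "fst (s[i := (l, c)] ! b) = Some y"
  with assms(2) have "a < length s" "b < length s"
    and "if i = a then l = Some y else fst (s ! a) = Some y"
    and "if i = b then l = Some y else fst (s ! b) = Some y"
    by (auto simp: nth_list_update)
  with assms(1,3) show "a = b"
    by (metis labels_distinctD)
qed

definition bin_weight :: "'a \<Rightarrow> 'a option \<times> nat \<Rightarrow> real" where
  "bin_weight x b = (if fst b = Some x then real (snd b) else 0)"

lemma uss_estimate_eq_sum_bin_weight:
  "labels_distinct s \<Longrightarrow> real (uss_estimate s x) = sum_list (map (bin_weight x) s)"
proof (induction s)
  case Nil
  then show ?case by (simp add: uss_estimate_def)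
next
  case (Cons b s)
  show ?case
  proof (cases "fst b = Some x")
    case True
    with labels_distinct_ConsD(2)[OF Cons.prems] have "\<forall>b'\<in>set s. fst b' \<noteq> Some x"
      by (metis in_set_conv_nth)
    then have "sum_list (map (bin_weight x) s) = sum_list (map (\<lambda>_. 0) s)"
      by (intro arg_cong[where f = sum_list] map_cong) (simp_all add: bin_weight_def)
    moreover have "uss_estimate (b # s) x = snd b"
      using True by (simp add: uss_estimate_def)
    moreover have "bin_weight x b = real (snd b)"
      using True by (simp add: bin_weight_def)
    ultimately show ?thesis by simp
  next
    case False
    with Cons.IH[OF labels_distinct_ConsD(1)[OF Cons.prems]] show ?thesis
      by (simp add: uss_estimate_def bin_weight_def)
  qed
qed

lemma sum_list_list_update:
  fixes xs :: "'a::ab_group_add list"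
  shows "k < length xs \<Longrightarrow> sum_list (xs[k := x]) = sum_list xs - xs ! k + x"
  by (induction xs arbitrary: k) (auto split: nat.split)

lemma sum_bin_weight_list_update:
  "i < length s \<Longrightarrow>
     sum_list (map (bin_weight x) (s[i := b]))
       = sum_list (map (bin_weight x) s) - bin_weight x (s ! i) + bin_weight x b"
  by (simp add: map_update sum_list_list_update)

lemma bin_weight_relabel_expectation:
  "1 / real (c + 1) * bin_weight x (Some y, c + 1) + (1 - 1 / real (c + 1)) * bin_weight x (l, c + 1)
     = bin_weight x (l, c) + (if y = x then 1 else 0)"
proof -
  have "1 / real (c + 1) * real (c + 1) = 1" "(1 - 1 / real (c + 1)) * real (c + 1) = real c"
    by (simp_all add: field_simps)
  then show ?thesis by (simp add: bin_weight_def)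
qed

lemma uss_step_labelled:
  assumes "labels_distinct s" "i < length s" "fst (s ! i) = Some y"
  shows "uss_step sel s y = return_pmf (s[i := (Some y, snd (s ! i) + 1)])"
proof -
  have "\<forall>j<i. fst (s ! j) \<noteq> Some y"
    using assms labels_distinctD[OF assms(1) _ assms(2) _ assms(3)] by (metis less_irrefl order.strict_trans)
  with assms(2,3) have "find (\<lambda>j. fst (s ! j) = Some y) [0..<length s] = Some i"
    by (auto simp: find_Some_iff)
  then show ?thesis by (simp add: uss_step_def)
qed

lemma uss_step_unlabelled:
  assumes "\<forall>j<length s. fst (s ! j) \<noteq> Some y"
  shows "uss_step sel s y =
           map_pmf (\<lambda>b. s[sel s := (if b then Some y else fst (s ! sel s), snd (s ! sel s) + 1)])
                   (bernoulli_pmf (1 / real (snd (s ! sel s) + 1)))"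
proof -
  from assms have "find (\<lambda>j. fst (s ! j) = Some y) [0..<length s] = None"
    by (auto simp: find_None_iff)
  then show ?thesis unfolding uss_step_def Let_def by simp
qed

lemma finite_set_pmf_uss_step: "finite (set_pmf (uss_step sel s y))"
  by (simp add: uss_step_def Let_def split: option.split)

lemma uss_step_invariant:
  assumes "sel s < length s" "labels_distinct s" "s' \<in> set_pmf (uss_step sel s y)"
  shows "length s' = length s \<and> labels_distinct s'"
proof (cases "\<exists>i<length s. fst (s ! i) = Some y")
  case True
  then obtain i where i: "i < length s" "fst (s ! i) = Some y" by blast
  with assms have "s' = s[i := (Some y, snd (s ! i) + 1)]"
    by (simp add: uss_step_labelled)
  moreover have "labels_distinct (s[i := (Some y, snd (s ! i) + 1)])"
    using i assms(2) by (intro labels_distinct_list_update) (auto dest: labels_distinctD)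
  ultimately show ?thesis by simp
next
  case False
  then have "labels_distinct (s[sel s := (l, c)])" if "l = Some y \<or> l = fst (s ! sel s)" for l c
    using that assms(1,2) by (intro labels_distinct_list_update) (auto dest: labels_distinctD)
  with False assms show ?thesis by (auto simp: uss_step_unlabelled)
qed

lemma expectation_uss_step:
  assumes "sel s < length s" "labels_distinct s"
  shows "measure_pmf.expectation (uss_step sel s y) (\<lambda>s'. real (uss_estimate s' x))
           = real (uss_estimate s x) + (if y = x then 1 else 0)"
proof -
  let ?E = "\<lambda>s. sum_list (map (bin_weight x) s)"
  have "measure_pmf.expectation (uss_step sel s y) (\<lambda>s'. real (uss_estimate s' x))
          = measure_pmf.expectation (uss_step sel s y) ?E"
    using uss_step_invariant[of sel s, OF assms]
    by (intro integral_cong_AE) (auto intro!: AE_pmfI simp: uss_estimate_eq_sum_bin_weight)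
  also have "\<dots> = ?E s + (if y = x then 1 else 0)"
  proof (cases "\<exists>i<length s. fst (s ! i) = Some y")
    case True
    then obtain i where i: "i < length s" "fst (s ! i) = Some y" by blast
    then show ?thesis
      using assms by (simp add: uss_step_labelled sum_bin_weight_list_update bin_weight_def)
  next
    case False
    define i l c where "i = sel s" and "l = fst (s ! sel s)" and "c = snd (s ! sel s)"
    define p where "p = 1 / real (c + 1)"
    have upd: "?E (s[i := (l', c + 1)]) = ?E s - bin_weight x (l, c) + bin_weight x (l', c + 1)" for l'
      using assms(1) by (simp add: i_def l_def c_def sum_bin_weight_list_update)
    have "measure_pmf.expectation (uss_step sel s y) ?E
            = p * ?E (s[i := (Some y, c + 1)]) + (1 - p) * ?E (s[i := (l, c + 1)])"
      unfolding uss_step_unlabelled[OF False[simplified]]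
      by (simp add: i_def l_def c_def p_def del: of_nat_Suc)
    also have "\<dots> = ?E s - bin_weight x (l, c)
                    + (p * bin_weight x (Some y, c + 1) + (1 - p) * bin_weight x (l, c + 1))"
      unfolding upd by (simp add: algebra_simps)
    also have "\<dots> = ?E s + (if y = x then 1 else 0)"
      unfolding p_def by (subst bin_weight_relabel_expectation) simp
    finally show ?thesis .
  qed
  also have "\<dots> = real (uss_estimate s x) + (if y = x then 1 else 0)"
    using assms(2) by (simp add: uss_estimate_eq_sum_bin_weight)
  finally show ?thesis .
qed

lemma uss_run_Suc: "uss_run m sel xs (Suc t) = uss_run m sel xs t \<bind> (\<lambda>s. uss_step sel s (xs t))"
  by (simp add: uss_run_def)

lemma finite_set_pmf_uss_run: "finite (set_pmf (uss_run m sel xs t))"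
  by (induction t) (auto simp: uss_run_Suc finite_set_pmf_uss_step, simp add: uss_run_def)

lemma uss_run_invariant:
  assumes "valid_min_selector m sel" "s \<in> set_pmf (uss_run m sel xs t)"
  shows "length s = m \<and> labels_distinct s"
  using assms(2)
proof (induction t arbitrary: s)
  case 0
  then show ?case by (simp add: uss_run_def labels_distinct_replicate_None)
next
  case (Suc t)
  then obtain s0 where "s0 \<in> set_pmf (uss_run m sel xs t)" "s \<in> set_pmf (uss_step sel s0 (xs t))"
    by (auto simp: uss_run_Suc)
  moreover from this Suc.IH assms(1) have "sel s0 < length s0"
    by (auto simp: valid_min_selector_def)
  ultimately show ?case using Suc.IH uss_step_invariant by metis
qed

lemma true_count_Suc: "true_count xs x (Suc t) = true_count xs x t + (if xs t = x then 1 else 0)"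
proof -
  have "{i. i < Suc t \<and> xs i = x} = {i. i < t \<and> xs i = x} \<union> (if xs t = x then {t} else {})"
    by (auto simp: less_Suc_eq)
  then show ?thesis by (simp add: true_count_def)
qed

theorem theorem1:
  fixes m :: nat and sel :: "'a uss_state \<Rightarrow> nat" and xs :: "nat \<Rightarrow> 'a" and x :: 'a and t :: nat
  assumes "m \<ge> 1" and "valid_min_selector m sel"
  shows "measure_pmf.expectation (uss_run m sel xs t) (\<lambda>s. real (uss_estimate s x))
           = real (true_count xs x t)"
proof (induction t)
  case 0
  have "real (uss_estimate (replicate m (None, 0)) x) = 0"
    by (simp add: uss_estimate_eq_sum_bin_weight labels_distinct_replicate_None bin_weight_def
        sum_list_replicate)
  then show ?case by (simp add: uss_run_def true_count_def)
next
  case (Suc t)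
  let ?M = "uss_run m sel xs t"
  have "measure_pmf.expectation (uss_step sel s (xs t)) (\<lambda>s. real (uss_estimate s x))
          = real (uss_estimate s x) + (if xs t = x then 1 else 0)" if "s \<in> set_pmf ?M" for s
    using uss_run_invariant[OF assms(2) that] assms(2)
    by (intro expectation_uss_step) (auto simp: valid_min_selector_def)
  then have "measure_pmf.expectation (uss_run m sel xs (Suc t)) (\<lambda>s. real (uss_estimate s x))
          = measure_pmf.expectation ?M (\<lambda>s. real (uss_estimate s x) + (if xs t = x then 1 else 0))"
    unfolding uss_run_Suc
    by (subst expectation_bind_pmf_finite)
       (auto intro!: integral_cong_AE AE_pmfI simp: finite_set_pmf_uss_run finite_set_pmf_uss_step)
  also have "\<dots> = real (true_count xs x (Suc t))"
    using Suc.IH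
    by (subst Bochner_Integration.integral_add)
       (auto intro: integrable_measure_pmf_finite finite_set_pmf_uss_run simp: true_count_Suc)
  finally show ?case .
qed

end
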